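(* Let $G$ be a finite simple graph. Then $G$ is a Tutte-Berge graph if and only if the induced subgraph of $G$ on $D(G)$ has no edges (i.e. $D(G)$ consists of isolated vertices only).
   Context: $\nu(G)$ is the matching number of $G$. For $U\subseteq V(G)$, $N_G(U)$ is the set of vertices of $G$ adjacent to at least one vertex of $U$. A set $T\subseteq V(G)$ is independent if no edge of $G$ has both endpoints in $T$. $G$ is a Tutte-Berge graph if there exists an independent set $T$ of $G$ with $|T| = |N_G(T)| + |V(G)| - 2\nu(G)$. $D(G)$ is the set of vertices of $G$ that are left uncovered by at least one maximum matching of $G$; $A(G)$ is the set of vertices in $V(G)\setminus D(G)$ adjacent to at least one vertex of $D(G)$; $C(G)=V(G)\setminus(D(G)\cup A(G))$ (Gallai–Edmonds decomposition). *)

theory Defs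
  imports Main
begin

definition simple_graph :: "'a set \<Rightarrow> 'a set set \<Rightarrow> bool" where
  "simple_graph V E \<longleftrightarrow> finite V \<and> (\<forall>e\<in>E. e \<subseteq> V \<and> card e = 2)"

definition matching :: "'a set set \<Rightarrow> 'a set set \<Rightarrow> bool" where
  "matching E M \<longleftrightarrow> M \<subseteq> E \<and> (\<forall>e1\<in>M. \<forall>e2\<in>M. e1 \<noteq> e2 \<longrightarrow> e1 \<inter> e2 = {})"

definition matching_number :: "'a set set \<Rightarrow> nat" where
  "matching_number E = Max (card ` {M. matching E M})"

definition max_matching :: "'a set set \<Rightarrow> 'a set set \<Rightarrow> bool" where
  "max_matching E M \<longleftrightarrow> matching E M \<and> card M = matching_number E"

definition neighbourhood :: "'a set \<Rightarrow> 'a set set \<Rightarrow> 'a set \<Rightarrow> 'a set" where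
  "neighbourhood V E U = {v\<in>V. \<exists>u\<in>U. {u, v} \<in> E}"

definition independent :: "'a set \<Rightarrow> 'a set set \<Rightarrow> 'a set \<Rightarrow> bool" where
  "independent V E T \<longleftrightarrow> T \<subseteq> V \<and> (\<forall>u\<in>T. \<forall>v\<in>T. {u, v} \<notin> E)"

definition tutte_berge_graph :: "'a set \<Rightarrow> 'a set set \<Rightarrow> bool" where
  "tutte_berge_graph V E \<longleftrightarrow>
     (\<exists>T. independent V E T \<and>
          int (card T) = int (card (neighbourhood V E T)) + int (card V) - 2 * int (matching_number E))"

definition GE_D :: "'a set \<Rightarrow> 'a set set \<Rightarrow> 'a set" where
  "GE_D V E = {v\<in>V. \<exists>M. max_matching E M \<and> v \<notin> \<Union>M}"

end

theory Submission
  imports Defs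
begin

text \<open>
  Fix a maximum matching \<open>M\<close> and write \<open>X\<close> for the set of \<open>M\<close>-exposed vertices, so
  \<open>|X| = |V| - 2\<nu>(G)\<close>. For every \<open>T \<subseteq> V\<close>, mapping a covered vertex of \<open>T\<close> to its mate is
  an injection into \<open>N(T)\<close>, hence \<open>|T| \<le> |N(T)| + |T \<inter> X|\<close>. If \<open>T\<close> attains the
  Tutte--Berge value, then \<open>X \<subseteq> T\<close> for every maximum matching, i.e. \<open>D(G) \<subseteq> T\<close>, so
  \<open>D(G)\<close> is independent when \<open>T\<close> is.

  Conversely, \<open>D(G)\<close> consists exactly of the vertices reachable from an exposed vertex by
  an even \<open>M\<close>-alternating path (flipping such a path moves the exposed vertex to its end).
  If \<open>D(G)\<close> is independent, a neighbour \<open>a\<close> of some \<open>d \<in> D(G)\<close> lies outside \<open>D(G)\<close>, and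
  extending or cutting an alternating path to \<open>d\<close> shows that the mate of \<open>a\<close> lies in
  \<open>D(G)\<close>. So mating is a bijection from the covered part of \<open>D(G)\<close> onto \<open>N(D(G))\<close>, and
  \<open>T = D(G)\<close> attains the Tutte--Berge value.
\<close>

text \<open>An even alternating path is stored reversed: its head is the end vertex, its last
  element the \<open>M\<close>-exposed start, and the edges, read from the start, alternate between
  \<open>F\<close> and \<open>M\<close>.\<close>

inductive even_alt_path :: "'a set \<Rightarrow> 'a set set \<Rightarrow> 'a set set \<Rightarrow> 'a list \<Rightarrow> bool"
  for V M F where
  exposed: "v \<in> V \<Longrightarrow> v \<notin> \<Union>M \<Longrightarrow> even_alt_path V M F [v]"
| extend: "even_alt_path V M F (y # p) \<Longrightarrow> {y, x} \<in> F \<Longrightarrow> {x, v} \<in> M \<Longrightarrow>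
    even_alt_path V M F (v # x # y # p)"

lemma even_alt_path_mono: "even_alt_path V M F q \<Longrightarrow> F \<subseteq> F' \<Longrightarrow> even_alt_path V M F' q"
  by (induction rule: even_alt_path.induct) (auto intro: even_alt_path.intros)

lemma even_alt_path_not_Nil: "even_alt_path V M F q \<Longrightarrow> q \<noteq> []"
  by (induction rule: even_alt_path.induct) auto

lemma even_alt_path_tl_in_edge: "even_alt_path V M F q \<Longrightarrow> z \<in> set (tl q) \<Longrightarrow> \<exists>e\<in>F. z \<in> e"
  by (induction rule: even_alt_path.induct) auto

lemma matching_edge_unique:
  "matching E M \<Longrightarrow> e \<in> M \<Longrightarrow> f \<in> M \<Longrightarrow> z \<in> e \<Longrightarrow> z \<in> f \<Longrightarrow> e = f"
  unfolding matching_def by blast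

definition partner :: "'a set set \<Rightarrow> 'a \<Rightarrow> 'a" where
  "partner M v = (SOME u. {v, u} \<in> M)"

locale finite_simple_graph =
  fixes V :: "'a set" and E :: "'a set set"
  assumes simple_graph: "simple_graph V E"
begin

lemma finite_V: "finite V"
  using simple_graph unfolding simple_graph_def by auto

lemma edge_subset_card: "e \<in> E \<Longrightarrow> e \<subseteq> V \<and> card e = 2"
  using simple_graph unfolding simple_graph_def by auto

lemma finite_E: "finite E"
  using edge_subset_card finite_V by (metis Pow_iff finite_Pow_iff finite_subset subsetI)

lemma edge_neq: "{u, v} \<in> E \<Longrightarrow> u \<noteq> v"
  using edge_subset_card by fastforce

lemma edge_in_V: "{u, v} \<in> E \<Longrightarrow> u \<in> V \<and> v \<in> V"
  using edge_subset_card by blast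

lemma edge_other_end:
  assumes "e \<in> E" "z \<in> e"
  obtains u where "e = {z, u}" "u \<noteq> z"
proof -
  from edge_subset_card[OF assms(1)] obtain x y where "e = {x, y}" "x \<noteq> y"
    by (auto simp: card_2_iff)
  with assms(2) that show thesis by auto
qed

lemma finite_matching: "matching E M \<Longrightarrow> finite M"
  unfolding matching_def using finite_E finite_subset by blast

lemma finite_matching_cards: "finite (card ` {M. matching E M})"
proof -
  have "{M. matching E M} \<subseteq> Pow E" unfolding matching_def by auto
  then show ?thesis using finite_E by (meson finite_Pow_iff finite_imageI finite_subset)
qed

lemma card_le_matching_number: "matching E M \<Longrightarrow> card M \<le> matching_number E"
  unfolding matching_number_def using finite_matching_cards by auto

lemma max_matching_exists: "\<exists>M. max_matching E M"
proof -
  have "matching E {}" unfolding matching_def by auto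
  then have "card ` {M. matching E M} \<noteq> {}" by auto
  from Max_in[OF finite_matching_cards this] show ?thesis
    unfolding max_matching_def matching_number_def by auto
qed

lemma matching_mate_unique:
  assumes "matching E M" "{a, w} \<in> M" "{a, v} \<in> M"
  shows "v = w"
proof -
  have "{a, v} = {a, w}" using matching_edge_unique[OF assms(1,3,2)] by blast
  moreover have "a \<noteq> v" using assms(1,3) edge_neq unfolding matching_def by blast
  ultimately show ?thesis by (metis doubleton_eq_iff)
qed

lemma Union_matching_subset: "matching E M \<Longrightarrow> \<Union>M \<subseteq> V"
  unfolding matching_def using edge_subset_card by blast

lemma card_Union_matching:
  assumes "matching E M"
  shows "card (\<Union>M) = 2 * card M"
proof -
  have ME: "M \<subseteq> E" using assms unfolding matching_def by simp
  have "pairwise disjnt M" using assms unfolding matching_def pairwise_def disjnt_def by simp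
  moreover have "\<And>e. e \<in> M \<Longrightarrow> finite e" using ME edge_subset_card finite_V finite_subset by blast
  ultimately have "card (\<Union>M) = sum card M" by (rule card_Union_disjoint)
  also have "\<dots> = sum (\<lambda>_. 2) M" using ME edge_subset_card by (intro sum.cong) auto
  finally show ?thesis by simp
qed

lemma card_exposed:
  assumes "max_matching E M"
  shows "int (card (V - \<Union>M)) = int (card V) - 2 * int (matching_number E)"
proof -
  have m: "matching E M" and c: "card M = matching_number E"
    using assms unfolding max_matching_def by auto
  have sub: "\<Union>M \<subseteq> V" using Union_matching_subset[OF m] .
  have "card (V - \<Union>M) = card V - card (\<Union>M)"
    using card_Diff_subset[OF finite_subset[OF sub finite_V] sub] .
  moreover have "card (\<Union>M) \<le> card V" using card_mono[OF finite_V sub] .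
  ultimately show ?thesis using card_Union_matching[OF m] c by simp
qed

lemma partner_in_matching:
  assumes "matching E M" "v \<in> \<Union>M"
  shows "{v, partner M v} \<in> M"
proof -
  obtain e where e: "e \<in> M" "v \<in> e" using assms(2) by blast
  moreover have "e \<in> E" using assms(1) e(1) unfolding matching_def by blast
  ultimately obtain u where "e = {v, u}" using edge_other_end by metis
  then show ?thesis unfolding partner_def using e(1) by (metis someI)
qed

lemma partner_eq: "matching E M \<Longrightarrow> {v, u} \<in> M \<Longrightarrow> partner M v = u"
  using partner_in_matching matching_mate_unique by blast

lemma inj_on_partner:
  assumes "matching E M"
  shows "inj_on (partner M) (\<Union>M)"
proof (rule inj_onI)
  fix s t assume "s \<in> \<Union>M" "t \<in> \<Union>M" "partner M s = partner M t"
  then have "{partner M s, s} \<in> M" "{partner M s, t} \<in> M"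
    using partner_in_matching[OF assms] by (metis insert_commute)+
  then show "s = t" using matching_mate_unique[OF assms] by blast
qed

lemma partner_in_neighbourhood:
  assumes "matching E M" "t \<in> \<Union>M" "t \<in> T"
  shows "partner M t \<in> neighbourhood V E T"
proof -
  have "{t, partner M t} \<in> E"
    using partner_in_matching[OF assms(1,2)] assms(1) unfolding matching_def by blast
  then show ?thesis unfolding neighbourhood_def using edge_in_V assms(3) by blast
qed

lemma matching_insert_edge:
  assumes "matching E M" "{x, y} \<in> E" "x \<notin> \<Union>M" "y \<notin> \<Union>M"
  shows "matching E (insert {x, y} M)" "card (insert {x, y} M) = Suc (card M)"
proof -
  show "matching E (insert {x, y} M)"
    using assms unfolding matching_def by blast
  have "{x, y} \<notin> M" using assms(3) by blast
  then show "card (insert {x, y} M) = Suc (card M)"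
    using finite_matching[OF assms(1)] by simp
qed

lemma matching_swap_edge:
  assumes M: "matching E M" and xv: "{x, v} \<in> M" and y: "y \<notin> \<Union>M" and yx: "{y, x} \<in> E"
  defines "M' \<equiv> insert {y, x} (M - {{x, v}})"
  shows "matching E M'" "card M' = card M" "v \<notin> \<Union>M'"
proof -
  have other: "x \<notin> e" "v \<notin> e" if "e \<in> M" "e \<noteq> {x, v}" for e
    using matching_edge_unique[OF M that(1) xv] that(2) by auto
  show "matching E M'"
    using M yx y other unfolding M'_def matching_def by (auto 4 3)
  have "{y, x} \<notin> M - {{x, v}}" using y by blast
  moreover have "card M > 0" using finite_matching[OF M] xv card_gt_0_iff by blast
  ultimately show "card M' = card M"
    unfolding M'_def using finite_matching[OF M] xv by (simp add: card_Suc_Diff1)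
  have "v \<noteq> y" using y xv by blast
  moreover have "v \<noteq> x" using xv M edge_neq unfolding matching_def by blast
  ultimately show "v \<notin> \<Union>M'" unfolding M'_def using other by auto
qed

lemma even_alt_path_hd_in_V: "even_alt_path V M F q \<Longrightarrow> matching E M \<Longrightarrow> hd q \<in> V"
  by (induction rule: even_alt_path.induct) (auto simp: matching_def dest: edge_in_V)

text \<open>The last conjunct is the invariant that makes the induction go through.\<close>

lemma even_alt_path_flip:
  assumes "even_alt_path V M F q" "F \<subseteq> E" "matching E M" "distinct q"
  shows "\<exists>M'. matching E M' \<and> card M' = card M \<and> hd q \<notin> \<Union>M' \<and>
    (\<forall>e\<in>M. e \<inter> set q = {} \<longrightarrow> e \<in> M')"
  using assms
proof (induction rule: even_alt_path.induct)
  case (exposed v)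
  then show ?case by (intro exI[of _ M]) simp
next
  case (extend y p x v)
  have "distinct (y # p)" using extend.prems(3) by simp
  from extend.IH[OF extend.prems(1,2) this] obtain M1
    where M1: "matching E M1" "card M1 = card M" "y \<notin> \<Union>M1"
      and keep: "\<forall>e\<in>M. e \<inter> set (y # p) = {} \<longrightarrow> e \<in> M1"
    by (metis list.sel(1))
  have "{x, v} \<inter> set (y # p) = {}" using extend.prems(3) by auto
  then have "{x, v} \<in> M1" using keep extend.hyps(3) by blast
  moreover have "{y, x} \<in> E" using extend.hyps(2) extend.prems(1) by blast
  ultimately have M2: "matching E (insert {y, x} (M1 - {{x, v}}))"
      "card (insert {y, x} (M1 - {{x, v}})) = card M"
      "v \<notin> \<Union>(insert {y, x} (M1 - {{x, v}}))"
    using matching_swap_edge[OF M1(1) _ M1(3)] M1(2) by auto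
  have "\<forall>e\<in>M. e \<inter> set (v # x # y # p) = {} \<longrightarrow> e \<in> insert {y, x} (M1 - {{x, v}})"
    using keep by auto
  with M2 show ?case by (metis list.sel(1))
qed

lemma even_alt_path_hd_in_GE_D:
  assumes "even_alt_path V M F q" "F \<subseteq> E" "max_matching E M" "distinct q"
  shows "hd q \<in> GE_D V E"
proof -
  have m: "matching E M" using assms(3) unfolding max_matching_def by auto
  from even_alt_path_flip[OF assms(1,2) m assms(4)] obtain M' where
    "matching E M'" "card M' = card M" "hd q \<notin> \<Union>M'" by auto
  moreover have "hd q \<in> V" using even_alt_path_hd_in_V assms(1) m by auto
  ultimately show ?thesis using assms(3) unfolding GE_D_def max_matching_def by auto
qed

text \<open>Swapping \<open>{x, y}\<close> for \<open>{d, x}\<close> in \<open>N\<close> gives a maximum matching exposing \<open>y\<close> that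
  is closer to \<open>M\<close>.\<close>

lemma max_matching_exchange_step:
  assumes M: "matching E M" and N: "max_matching E N" and d: "d \<notin> \<Union>N" and dx: "{d, x} \<in> M"
  obtains y N1 where "max_matching E N1" "y \<notin> \<Union>N1" "{y, x} \<in> N - M" "{d, x} \<in> N1"
    "N1 - M \<subseteq> N - M" "card (N1 - M) < card (N - M)"
proof -
  have m: "matching E N" "card N = matching_number E"
    using N unfolding max_matching_def by auto
  have dxE: "{d, x} \<in> E" using dx M unfolding matching_def by blast
  have "x \<in> \<Union>N"
  proof (rule ccontr)
    assume "x \<notin> \<Union>N"
    then have "Suc (card N) \<le> matching_number E"
      using matching_insert_edge[OF m(1) dxE d] card_le_matching_number by metis
    then show False using m(2) by simp
  qed
  then obtain y where xy: "{x, y} \<in> N" using partner_in_matching[OF m(1)] by blast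
  have "y \<noteq> d" using xy d by blast
  then have xyM: "{x, y} \<notin> M"
    using matching_mate_unique[OF M, of x d y] dx by (metis insert_commute)
  define N1 where "N1 = insert {d, x} (N - {{x, y}})"
  have N1: "matching E N1" "card N1 = card N" "y \<notin> \<Union>N1"
    using matching_swap_edge[OF m(1) xy d dxE] unfolding N1_def by auto
  have N1M: "N1 - M = (N - M) - {{x, y}}" using dx unfolding N1_def by auto
  have "{x, y} \<in> N - M" using xy xyM by blast
  then have "card (N1 - M) < card (N - M)"
    unfolding N1M using finite_matching[OF m(1)] by (intro card_Diff1_less) auto
  moreover have "max_matching E N1" using N1 m(2) unfolding max_matching_def by simp
  moreover have "{y, x} \<in> N - M" using \<open>{x, y} \<in> N - M\<close> by (simp add: insert_commute)
  moreover have "{d, x} \<in> N1" "N1 - M \<subseteq> N - M" using N1M unfolding N1_def by auto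
  ultimately show thesis using that N1(3) by blast
qed

lemma exposed_by_max_matching_even_alt_path:
  assumes M: "matching E M"
  shows "max_matching E N \<Longrightarrow> d \<in> V \<Longrightarrow> d \<notin> \<Union>N \<Longrightarrow>
    \<exists>q. even_alt_path V M (N - M) q \<and> distinct q \<and> hd q = d"
proof (induction "card (N - M)" arbitrary: N d rule: less_induct)
  case less
  show ?case
  proof (cases "d \<in> \<Union>M")
    case False
    with less.prems(2) have "even_alt_path V M (N - M) [d]" by (rule even_alt_path.exposed)
    then show ?thesis by fastforce
  next
    case True
    obtain x where dx: "{d, x} \<in> M" using partner_in_matching[OF M True] by blast
    obtain y N1 where N1: "max_matching E N1" "y \<notin> \<Union>N1"
      and yx: "{y, x} \<in> N - M" and dxN1: "{d, x} \<in> N1"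
      and sub: "N1 - M \<subseteq> N - M" and closer: "card (N1 - M) < card (N - M)"
      by (rule max_matching_exchange_step[OF M less.prems(1,3) dx])
    have yxE: "{y, x} \<in> E" using yx less.prems(1) unfolding max_matching_def matching_def by blast
    obtain q1 where q1: "even_alt_path V M (N1 - M) q1" "distinct q1" "hd q1 = y"
      using less.hyps[OF closer N1(1) _ N1(2)] yxE edge_in_V by blast
    then obtain p where p: "q1 = y # p" using even_alt_path_not_Nil by (cases q1) auto
    have "{x, d} \<in> M" using dx by (simp add: insert_commute)
    with even_alt_path_mono[OF q1(1) sub] p yx
    have "even_alt_path V M (N - M) (d # x # y # p)" by (auto intro: even_alt_path.extend)
    moreover have "z \<notin> set q1" if z: "z \<in> {d, x}" for z
    proof
      assume "z \<in> set q1"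
      moreover have "y \<noteq> d" "y \<noteq> x" using yx less.prems(3) edge_neq[OF yxE] by auto
      then have "z \<noteq> y" using z by auto
      ultimately obtain g where "g \<in> N1 - M" "z \<in> g"
        using even_alt_path_tl_in_edge[OF q1(1)] p by fastforce
      then show False
        using matching_edge_unique[of E N1 g "{d, x}" z] N1(1) dxN1 z dx
        unfolding max_matching_def by blast
    qed
    moreover have "d \<noteq> x" using dx M edge_neq unfolding matching_def by blast
    ultimately show ?thesis using q1(2) p by fastforce
  qed
qed

lemma GE_D_iff_even_alt_path:
  assumes "max_matching E M"
  shows "d \<in> GE_D V E \<longleftrightarrow> (\<exists>q. even_alt_path V M E q \<and> distinct q \<and> hd q = d)"
proof
  assume "d \<in> GE_D V E"
  then obtain N where "max_matching E N" "d \<in> V" "d \<notin> \<Union>N" unfolding GE_D_def by blast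
  moreover have "matching E M" using assms unfolding max_matching_def by simp
  ultimately obtain q where "even_alt_path V M (N - M) q" "distinct q" "hd q = d"
    using exposed_by_max_matching_even_alt_path by blast
  moreover have "N - M \<subseteq> E" using \<open>max_matching E N\<close> unfolding max_matching_def matching_def by blast
  ultimately show "\<exists>q. even_alt_path V M E q \<and> distinct q \<and> hd q = d"
    using even_alt_path_mono by blast
next
  assume "\<exists>q. even_alt_path V M E q \<and> distinct q \<and> hd q = d"
  then show "d \<in> GE_D V E" using even_alt_path_hd_in_GE_D[OF _ order_refl assms] by blast
qed

lemma even_alt_path_vertex_or_mate_in_GE_D:
  assumes "even_alt_path V M E q" "max_matching E M" "distinct q" "z \<in> set q"
  shows "z \<in> GE_D V E \<or> (\<exists>w. {z, w} \<in> M \<and> w \<in> GE_D V E)"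
  using assms
proof (induction rule: even_alt_path.induct)
  case (exposed v)
  then show ?case using GE_D_iff_even_alt_path even_alt_path.exposed by fastforce
next
  case (extend y p x v)
  have v: "v \<in> GE_D V E"
    using GE_D_iff_even_alt_path[OF extend.prems(1)] even_alt_path.extend[OF extend.hyps]
      extend.prems(2) by fastforce
  consider "z = v" | "z = x" | "z \<in> set (y # p)" using extend.prems(3) by auto
  then show ?case
  proof cases
    case 1
    then show ?thesis using v by simp
  next
    case 2
    then show ?thesis using v extend.hyps(3) by blast
  next
    case 3
    then show ?thesis using extend.IH extend.prems(1,2) by simp
  qed
qed

lemma GE_D_mate_closed:
  assumes M: "max_matching E M" and a: "a \<notin> GE_D V E" and d: "d \<in> GE_D V E"
    and da: "{d, a} \<in> E" and aw: "{a, w} \<in> M"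
  shows "w \<in> GE_D V E"
proof -
  have m: "matching E M" using M unfolding max_matching_def by simp
  obtain q where q: "even_alt_path V M E q" "distinct q" "hd q = d"
    using d GE_D_iff_even_alt_path[OF M] by blast
  consider "a \<in> set q" | "w \<in> set q" | "a \<notin> set q" "w \<notin> set q" by blast
  then show ?thesis
  proof cases
    case 1
    then show ?thesis
      using even_alt_path_vertex_or_mate_in_GE_D[OF q(1) M q(2)] a matching_mate_unique[OF m aw]
      by blast
  next
    case 2
    then have "w \<in> GE_D V E \<or> (\<exists>v. {w, v} \<in> M \<and> v \<in> GE_D V E)"
      using even_alt_path_vertex_or_mate_in_GE_D[OF q(1) M q(2)] by blast
    then show ?thesis
      using a matching_mate_unique[OF m, of w a] aw by (metis insert_commute)
  next
    case 3
    obtain p where p: "q = d # p" using q(3) even_alt_path_not_Nil[OF q(1)] by (cases q) auto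
    have "w \<noteq> a" using aw m edge_neq unfolding matching_def by blast
    then have "distinct (w # a # d # p)" using q(2) p 3 by auto
    moreover have "even_alt_path V M E (w # a # d # p)"
      using even_alt_path.extend[OF q(1)[unfolded p] da] aw by (simp add: insert_commute)
    ultimately show ?thesis using GE_D_iff_even_alt_path[OF M] by fastforce
  qed
qed

lemma card_le_neighbourhood_plus_exposed:
  assumes "matching E M" "T \<subseteq> V"
  shows "card T \<le> card (neighbourhood V E T) + card (T - \<Union>M)"
proof -
  have "card (T \<inter> \<Union>M) \<le> card (neighbourhood V E T)"
  proof (rule card_inj_on_le)
    show "inj_on (partner M) (T \<inter> \<Union>M)"
      using inj_on_partner[OF assms(1)] inj_on_subset by blast
    show "partner M ` (T \<inter> \<Union>M) \<subseteq> neighbourhood V E T"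
      using partner_in_neighbourhood[OF assms(1)] by blast
    show "finite (neighbourhood V E T)" using finite_V unfolding neighbourhood_def by simp
  qed
  moreover have "card T = card (T \<inter> \<Union>M) + card (T - \<Union>M)"
    using card_Int_Diff[OF finite_subset[OF assms(2) finite_V]] .
  ultimately show ?thesis by linarith
qed

lemma GE_D_subset_if_tutte_berge_value:
  assumes T: "T \<subseteq> V"
    and attains: "int (card T) =
      int (card (neighbourhood V E T)) + int (card V) - 2 * int (matching_number E)"
  shows "GE_D V E \<subseteq> T"
proof
  fix d assume "d \<in> GE_D V E"
  then obtain M where M: "max_matching E M" "d \<in> V" "d \<notin> \<Union>M" unfolding GE_D_def by blast
  then have "card (V - \<Union>M) \<le> card (T - \<Union>M)"
    using card_le_neighbourhood_plus_exposed[OF _ T, of M] card_exposed[OF M(1)] attains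
    unfolding max_matching_def by linarith
  moreover have "T - \<Union>M \<subseteq> V - \<Union>M" using T by blast
  ultimately have "T - \<Union>M = V - \<Union>M"
    by (intro card_seteq) (use finite_V in auto)
  then show "d \<in> T" using M by blast
qed

lemma bij_betw_partner_GE_D_neighbourhood:
  assumes M: "max_matching E M" and indep: "independent V E (GE_D V E)"
  shows "bij_betw (partner M) (GE_D V E \<inter> \<Union>M) (neighbourhood V E (GE_D V E))"
proof -
  have m: "matching E M" using M unfolding max_matching_def by simp
  have "neighbourhood V E (GE_D V E) \<subseteq> partner M ` (GE_D V E \<inter> \<Union>M)"
  proof
    fix a assume "a \<in> neighbourhood V E (GE_D V E)"
    then obtain d where a: "a \<in> V" "d \<in> GE_D V E" "{d, a} \<in> E"
      unfolding neighbourhood_def by blast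
    then have "a \<notin> GE_D V E" using indep unfolding independent_def by blast
    moreover from this have "a \<in> \<Union>M" using a(1) M unfolding GE_D_def by blast
    ultimately have "partner M a \<in> GE_D V E"
      using GE_D_mate_closed[OF M _ a(2,3)] partner_in_matching[OF m] by blast
    moreover have "{partner M a, a} \<in> M"
      using partner_in_matching[OF m \<open>a \<in> \<Union>M\<close>] by (simp add: insert_commute)
    ultimately have "partner M a \<in> GE_D V E \<inter> \<Union>M" "partner M (partner M a) = a"
      using partner_eq[OF m] by blast+
    then show "a \<in> partner M ` (GE_D V E \<inter> \<Union>M)" by (metis image_eqI)
  qed
  moreover have "partner M ` (GE_D V E \<inter> \<Union>M) \<subseteq> neighbourhood V E (GE_D V E)"
    using partner_in_neighbourhood[OF m] by blast
  moreover have "inj_on (partner M) (GE_D V E \<inter> \<Union>M)"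
    using inj_on_partner[OF m] inj_on_subset by blast
  ultimately show ?thesis unfolding bij_betw_def by blast
qed

lemma card_GE_D_if_independent:
  assumes indep: "independent V E (GE_D V E)"
  shows "int (card (GE_D V E)) = int (card (neighbourhood V E (GE_D V E))) + int (card V)
    - 2 * int (matching_number E)"
proof -
  obtain M where M: "max_matching E M" using max_matching_exists by blast
  have "card (GE_D V E) = card (GE_D V E \<inter> \<Union>M) + card (GE_D V E - \<Union>M)"
  proof (rule card_Int_Diff)
    show "finite (GE_D V E)" using finite_V unfolding GE_D_def by simp
  qed
  moreover have "card (GE_D V E \<inter> \<Union>M) = card (neighbourhood V E (GE_D V E))"
    using bij_betw_same_card[OF bij_betw_partner_GE_D_neighbourhood[OF M indep]] .
  moreover have "GE_D V E - \<Union>M = V - \<Union>M" using M unfolding GE_D_def by blast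
  ultimately show ?thesis using card_exposed[OF M] by simp
qed

end

theorem theorem1p3:
  fixes V :: "'a set" and E :: "'a set set"
  assumes "simple_graph V E"
  shows "tutte_berge_graph V E \<longleftrightarrow> (\<forall>u\<in>GE_D V E. \<forall>v\<in>GE_D V E. {u, v} \<notin> E)"
proof -
  interpret finite_simple_graph V E using assms by unfold_locales
  show ?thesis
  proof
    assume "tutte_berge_graph V E"
    then obtain T where "independent V E T"
      and "int (card T) =
        int (card (neighbourhood V E T)) + int (card V) - 2 * int (matching_number E)"
      unfolding tutte_berge_graph_def by blast
    moreover from this have "GE_D V E \<subseteq> T"
      using GE_D_subset_if_tutte_berge_value unfolding independent_def by blast
    ultimately show "\<forall>u\<in>GE_D V E. \<forall>v\<in>GE_D V E. {u, v} \<notin> E"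
      unfolding independent_def by blast
  next
    assume "\<forall>u\<in>GE_D V E. \<forall>v\<in>GE_D V E. {u, v} \<notin> E"
    then have "independent V E (GE_D V E)" unfolding independent_def GE_D_def by blast
    then show "tutte_berge_graph V E"
      using card_GE_D_if_independent unfolding tutte_berge_graph_def by blast
  qed
qed

end
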